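(* Let $F$ be analytic in the unit disk $\mathbb{D}$. If $F f \in \mathcal{P}$ for every $f \in \mathcal{P}$ (that is, the weighted composition transformation $T_{F,\varphi}$ with $\varphi(z)=z$ preserves $\mathcal{P}$), then $F \equiv 1$.
   Context: $\mathbb{D}$ is the open unit disk. $\mathcal{P}$ (the Carathéodory class) is the set of all analytic functions $f$ on $\mathbb{D}$ with $\mathrm{Re}\, f>0$ on $\mathbb{D}$ and $f(0)=1$. For $F$ analytic in $\mathbb{D}$ and $\varphi$ an analytic self-map of $\mathbb{D}$, $T_{F,\varphi}(f)=F\cdot(f\circ\varphi)$; it preserves $\mathcal{P}$ if $T_{F,\varphi}(f)\in\mathcal{P}$ for all $f\in\mathcal{P}$. *)

theory Defs
  imports "HOL-Complex_Analysis.Complex_Analysis"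
begin

definition caratheodory_class :: "(complex \<Rightarrow> complex) set" where
  "caratheodory_class = {f. f holomorphic_on ball 0 1 \<and> (\<forall>z\<in>ball 0 1. Re (f z) > 0) \<and> f 0 = 1}"

end

theory Submission
  imports Defs
begin

text \<open>
  Testing the hypothesis on the Cayley functions \<open>(1 + a w) / (1 - a w)\<close>, \<open>|a| = 1\<close>, with \<open>a z\<close>
  purely imaginary gives \<open>2 |z| |Im F(z)| < Re F(z) (1 - |z|\<^sup>2)\<close>. Hence the harmonic function
  \<open>arg F = Im (Ln F)\<close> is bounded by \<open>(1 - r\<^sup>2) / (2 r)\<close> on the circle \<open>|z| = r\<close>, which tends to \<open>0\<close>
  as \<open>r \<rightarrow> 1\<close>; by the maximum principle \<open>Ln F\<close> is real-valued, hence constant by the open mapping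
  theorem, and \<open>F(0) = 1\<close> forces \<open>F = 1\<close>.
\<close>

lemma Re_Cayley_pos:
  fixes u :: complex
  assumes "norm u < 1"
  shows "Re ((1 + u) / (1 - u)) > 0"
proof -
  have "Re ((1 + u) / (1 - u)) = Re ((1 + u) * cnj (1 - u)) / (norm (1 - u))\<^sup>2"
    by (simp add: Re_divide cmod_power2)
  also have "Re ((1 + u) * cnj (1 - u)) = 1 - (norm u)\<^sup>2"
    by (simp add: cmod_power2 algebra_simps power2_eq_square[symmetric])
  finally have eq: "Re ((1 + u) / (1 - u)) = (1 - (norm u)\<^sup>2) / (norm (1 - u))\<^sup>2" .
  have "(norm u)\<^sup>2 < 1\<^sup>2"
    using assms by (intro power_strict_mono) auto
  moreover have "1 - u \<noteq> 0"
    using assms by auto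
  ultimately show ?thesis
    unfolding eq by simp
qed

lemma Cayley_in_caratheodory_class:
  fixes a :: complex
  assumes "norm a \<le> 1"
  shows "(\<lambda>w. (1 + a * w) / (1 - a * w)) \<in> caratheodory_class"
proof -
  have lt: "norm (a * w) < 1" if "w \<in> ball 0 1" for w
  proof -
    have "norm (a * w) \<le> norm w"
      using assms by (simp add: norm_mult mult_left_le_one_le)
    also have "\<dots> < 1"
      using that by simp
    finally show ?thesis .
  qed
  have "(\<lambda>w. (1 + a * w) / (1 - a * w)) holomorphic_on ball 0 1"
  proof (intro holomorphic_intros)
    show "1 - a * w \<noteq> 0" if "w \<in> ball 0 1" for w
      using lt[OF that] by auto
  qed
  then show ?thesis
    using lt Re_Cayley_pos unfolding caratheodory_class_def by simp
qed

lemma Re_mult_Cayley_imaginary: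
  fixes w :: complex and t :: real
  shows "Re (w * ((1 + \<i> * t) / (1 - \<i> * t))) = (Re w * (1 - t\<^sup>2) - Im w * (2 * t)) / (1 + t\<^sup>2)"
proof -
  have pos: "1 + t\<^sup>2 > 0"
    by (simp add: add_pos_nonneg)
  have "(1 + \<i> * t) / (1 - \<i> * t) = Complex ((1 - t\<^sup>2) / (1 + t\<^sup>2)) (2 * t / (1 + t\<^sup>2))"
    using pos by (simp add: complex_eq_iff Re_divide Im_divide power2_eq_square field_simps)
  then show ?thesis
    by (simp add: diff_divide_distrib[symmetric] times_divide_eq_right)
qed

lemma caratheodory_multiplier_bound:
  fixes F :: "complex \<Rightarrow> complex"
  assumes mult: "\<forall>f\<in>caratheodory_class. (\<lambda>z. F z * f z) \<in> caratheodory_class"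
    and z: "z \<in> ball 0 1" "z \<noteq> 0"
  shows "2 * norm z * \<bar>Im (F z)\<bar> < Re (F z) * (1 - (norm z)\<^sup>2)"
proof -
  have side: "Im (F z) * (2 * t) < Re (F z) * (1 - (norm z)\<^sup>2)"
    if t: "t = norm z \<or> t = - norm z" for t :: real
  proof -
    define a where "a = \<i> * of_real t / z"
    have "norm a = 1"
      using z t by (auto simp: a_def norm_divide norm_mult)
    then have "(\<lambda>w. (1 + a * w) / (1 - a * w)) \<in> caratheodory_class"
      by (intro Cayley_in_caratheodory_class) simp
    then have "(\<lambda>w. F w * ((1 + a * w) / (1 - a * w))) \<in> caratheodory_class"
      by (rule bspec[OF mult])
    then have "Re (F z * ((1 + a * z) / (1 - a * z))) > 0"
      using z unfolding caratheodory_class_def by auto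
    moreover have "a * z = \<i> * of_real t"
      using z by (simp add: a_def)
    ultimately have "(Re (F z) * (1 - t\<^sup>2) - Im (F z) * (2 * t)) / (1 + t\<^sup>2) > 0"
      by (simp only: Re_mult_Cayley_imaginary)
    moreover have "t\<^sup>2 = (norm z)\<^sup>2"
      using t by auto
    moreover have "1 + t\<^sup>2 > 0"
      by (simp add: add_pos_nonneg)
    ultimately show ?thesis
      by (simp add: zero_less_divide_iff)
  qed
  from side[of "norm z"] side[of "- norm z"] show ?thesis
    by (auto simp: abs_if algebra_simps)
qed

lemma abs_Im_Ln_le:
  fixes w :: complex
  assumes "Re w > 0"
  shows "\<bar>Im (Ln w)\<bar> \<le> \<bar>Im w\<bar> / Re w"
proof -
  define \<theta> where "\<theta> = Im (Ln w)"
  have "exp (Ln w) = w"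
    using assms by (intro exp_Ln) auto
  then have re: "Re w = exp (Re (Ln w)) * cos \<theta>" and im: "Im w = exp (Re (Ln w)) * sin \<theta>"
    using Re_exp[of "Ln w"] Im_exp[of "Ln w"] by (simp_all add: \<theta>_def)
  have "\<bar>\<theta>\<bar> < pi / 2"
    using Re_Ln_pos_lt_imp assms \<theta>_def by blast
  then have "\<bar>\<theta>\<bar> \<le> \<bar>tan \<theta>\<bar>"
    by (rule abs_tan_ge)
  also have "\<bar>tan \<theta>\<bar> = \<bar>Im w\<bar> / Re w"
    using assms re im by (simp add: tan_def abs_mult abs_divide zero_less_mult_iff)
  finally show ?thesis
    unfolding \<theta>_def .
qed

lemma abs_Im_le_from_circle:
  fixes G :: "complex \<Rightarrow> complex"
  assumes hol: "G holomorphic_on cball a r"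
    and circle: "\<And>z. z \<in> sphere a r \<Longrightarrow> \<bar>Im (G z)\<bar> \<le> B"
    and z0: "z0 \<in> ball a r"
  shows "\<bar>Im (G z0)\<bar> \<le> B"
proof -
  have r: "r > 0"
    using z0 zero_le_dist[of a z0] unfolding mem_ball by linarith
  have "Re (c * G z0) \<le> B" if c: "c = \<i> \<or> c = - \<i>" for c
  proof (rule maximum_real_frontier[where S = "ball a r" and f = "\<lambda>z. c * G z"])
    show "(\<lambda>z. c * G z) holomorphic_on interior (ball a r)"
      using hol by (auto intro!: holomorphic_intros intro: holomorphic_on_subset)
    show "continuous_on (closure (ball a r)) (\<lambda>z. c * G z)"
      using hol r by (auto intro!: holomorphic_on_imp_continuous_on holomorphic_intros)
    show "Re (c * G z) \<le> B" if "z \<in> frontier (ball a r)" for z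
      using circle[of z] that r c by auto
  qed (use z0 in auto)
  from this[of "\<i>"] this[of "- \<i>"] show ?thesis
    by auto
qed

lemma Im_eq_0_if_boundary_bound:
  fixes G :: "complex \<Rightarrow> complex" and b :: "real \<Rightarrow> real"
  assumes hol: "G holomorphic_on ball 0 1"
    and lim: "(b \<longlongrightarrow> 0) (at_left 1)"
    and bound: "\<And>z. z \<in> ball 0 1 \<Longrightarrow> z \<noteq> 0 \<Longrightarrow> \<bar>Im (G z)\<bar> \<le> b (norm z)"
    and z0: "z0 \<in> ball 0 1"
  shows "Im (G z0) = 0"
proof -
  have "\<bar>Im (G z0)\<bar> \<le> b r" if r: "norm z0 < r" "r < 1" for r
  proof (rule abs_Im_le_from_circle[where G = G and a = 0 and r = r])
    show "G holomorphic_on cball 0 r"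
      using hol r by (auto intro: holomorphic_on_subset)
    show "\<bar>Im (G z)\<bar> \<le> b r" if z: "z \<in> sphere 0 r" for z
    proof -
      have "norm z = r"
        using z by simp
      moreover have "z \<in> ball 0 1" "z \<noteq> 0"
        using calculation r norm_ge_zero[of z0] by auto
      ultimately show ?thesis
        using bound by metis
    qed
  qed (use r in auto)
  moreover have "eventually (\<lambda>r. norm z0 < r \<and> r < 1) (at_left (1::real))"
    using z0 eventually_at_left_real[of "norm z0" 1] by simp
  ultimately have "eventually (\<lambda>r. \<bar>Im (G z0)\<bar> \<le> b r) (at_left (1::real))"
    by (auto elim: eventually_mono)
  then have "\<bar>Im (G z0)\<bar> \<le> 0"
    using tendsto_le[OF trivial_limit_at_left_real lim tendsto_const] by blast
  then show ?thesis
    by simp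
qed

lemma real_valued_holomorphic_constant_on:
  fixes G :: "complex \<Rightarrow> complex"
  assumes hol: "G holomorphic_on S" and "open S" "connected S"
    and real: "\<And>z. z \<in> S \<Longrightarrow> Im (G z) = 0"
  shows "G constant_on S"
proof (rule ccontr)
  assume nonconst: "\<not> G constant_on S"
  then obtain z where z: "z \<in> S"
    unfolding constant_on_def by blast
  have "open (G ` S)"
    using open_mapping_thm[OF hol \<open>open S\<close> \<open>connected S\<close> \<open>open S\<close> order_refl nonconst] .
  then obtain e where e: "e > 0" "ball (G z) e \<subseteq> G ` S"
    using z by (meson imageI open_contains_ball)
  have "G z + \<i> * of_real (e / 2) \<in> ball (G z) e"
    using e by (simp add: dist_norm norm_mult)
  then obtain w where "w \<in> S" "G w = G z + \<i> * of_real (e / 2)"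
    using e(2) by (metis imageE subsetD)
  then show False
    using real[of w] real[OF z] e(1) by simp
qed

theorem proposition2p1:
  fixes F :: "complex \<Rightarrow> complex"
  assumes "F holomorphic_on ball 0 1"
    and "\<forall>f\<in>caratheodory_class. (\<lambda>z. F z * f z) \<in> caratheodory_class"
  shows "\<forall>z\<in>ball 0 1. F z = 1"
proof -
  have "(\<lambda>_. 1) \<in> caratheodory_class"
    using Cayley_in_caratheodory_class[of 0] by simp
  with assms(2) have "(\<lambda>z. F z * 1) \<in> caratheodory_class"
    by (rule bspec)
  then have Re_F: "\<And>z. z \<in> ball 0 1 \<Longrightarrow> Re (F z) > 0" and "F 0 = 1"
    unfolding caratheodory_class_def by auto
  define G where "G z = Ln (F z)" for z
  have hol: "G holomorphic_on ball 0 1"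
    unfolding G_def
  proof (rule holomorphic_on_Ln'[OF _ assms(1)])
    show "F z \<notin> \<real>\<^sub>\<le>\<^sub>0" if "z \<in> ball 0 1" for z
      using Re_F[OF that] by (auto simp: complex_nonpos_Reals_iff)
  qed
  have "\<bar>Im (G z)\<bar> \<le> (1 - (norm z)\<^sup>2) / (2 * norm z)" if "z \<in> ball 0 1" "z \<noteq> 0" for z
  proof -
    have "\<bar>Im (G z)\<bar> \<le> \<bar>Im (F z)\<bar> / Re (F z)"
      unfolding G_def using abs_Im_Ln_le Re_F that(1) by blast
    also have "\<dots> \<le> (1 - (norm z)\<^sup>2) / (2 * norm z)"
      using caratheodory_multiplier_bound[OF assms(2) that] Re_F[OF that(1)] that
      by (simp add: divide_simps mult.commute mult.left_commute)
    finally show ?thesis .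
  qed
  moreover have "((\<lambda>r::real. (1 - r\<^sup>2) / (2 * r)) \<longlongrightarrow> 0) (at_left 1)"
    by (intro tendsto_eq_intros) auto
  ultimately have "\<And>z. z \<in> ball 0 1 \<Longrightarrow> Im (G z) = 0"
    using Im_eq_0_if_boundary_bound[OF hol] by blast
  then have "G constant_on ball 0 1"
    using real_valued_holomorphic_constant_on[OF hol] by blast
  moreover have "G 0 = 0"
    using \<open>F 0 = 1\<close> by (simp add: G_def)
  ultimately have "\<And>z. z \<in> ball 0 1 \<Longrightarrow> G z = 0"
    unfolding constant_on_def by (metis centre_in_ball zero_less_one)
  then show ?thesis
    using Re_F by (metis G_def exp_Ln exp_zero less_irrefl zero_complex.simps(1))
qed

end
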